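(* Let $\sigma(x,y)=(x\rightharpoonup y,x\leftharpoonup y)$ be an involutive non-degenerate quiver-theoretic Yang--Baxter map on a quiver $\mathscr{A}$ over $\Lambda$, and let $E$ be the closure of (the image of) $\mathscr{A}$ under right-lcms in the structure category $\mathscr{C}(\sigma)$. Let $x\bullet y:=(\cdot\leftharpoonup x)^{-1}(y)$ for $\mathfrak{t}(x)=\mathfrak{t}(y)$ and $x\,\tilde\star\,y:=y\bullet x$. For $\mu\in\Lambda$ and a finite set $J=\{y_1,\dots,y_n\}\subseteq\mathscr{A}(\Lambda,\mu)$ of pairwise distinct arrows, define $\tilde\Omega_1(y_1)=y_1$, $\tilde\Omega_j(y_1,\dots,y_j)=\tilde\Omega_{j-1}(y_1,y_3,\dots,y_j)\,\tilde\star\,\tilde\Omega_{j-1}(y_2,\dots,y_j)$ for $2\le j\le n$, and $\tilde\Delta_J=[\tilde\Omega_n(y_1,\dots,y_n)|\tilde\Omega_{n-1}(y_2,\dots,y_n)|\dots|\tilde\Omega_1(y_n)]\in\mathscr{C}(\sigma)$ (the left-lcm of $J$). Then $E=\{\tilde\Delta_J\mid\mu\in\Lambda,\ J\subseteq\mathscr{A}(\Lambda,\mu),\ 1\le|J|<\infty\}\cup\mathbf{1}_{\mathscr{A}}$, where $\mathbf{1}_{\mathscr{A}}$ is the set of identities of $\mathscr{C}(\sigma)$.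
   Context: A quiver-theoretic Yang--Baxter map is a source/target-preserving map $\sigma$ on composable pairs satisfying the braid relation; involutive: $\sigma^2=\mathrm{id}$; non-degenerate: all $x\rightharpoonup\cdot\colon\mathscr{A}(\mathfrak{t}(x),\Lambda)\to\mathscr{A}(\mathfrak{s}(x),\Lambda)$ and $\cdot\leftharpoonup y\colon\mathscr{A}(\Lambda,\mathfrak{s}(y))\to\mathscr{A}(\Lambda,\mathfrak{t}(y))$ bijective. $\mathscr{C}(\sigma)$ is the category presented by generators $\mathscr{A}$ and relations $x|y\sim(x\rightharpoonup y)|(x\leftharpoonup y)$; $[w]$ denotes the class of a path $w$. Right-lcm (resp. left-lcm): a common right- (resp. left-) multiple that left- (resp. right-) divides every common right- (resp. left-) multiple. *)

theory Defs
  imports Main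
begin

text \<open>A path is a pair (v, xs): start vertex v and a list of consecutive arrows
  (tgt of each arrow equals src of the next).  sigma x y = (x \<rightharpoonup> y, x \<leftharpoonup> y).\<close>

definition quiver :: "'v set \<Rightarrow> 'a set \<Rightarrow> ('a \<Rightarrow> 'v) \<Rightarrow> ('a \<Rightarrow> 'v) \<Rightarrow> bool" where
  "quiver Lam A src tgt \<longleftrightarrow> (\<forall>x\<in>A. src x \<in> Lam \<and> tgt x \<in> Lam)"

definition composable :: "'a set \<Rightarrow> ('a \<Rightarrow> 'v) \<Rightarrow> ('a \<Rightarrow> 'v) \<Rightarrow> 'a \<Rightarrow> 'a \<Rightarrow> bool" where
  "composable A src tgt x y \<longleftrightarrow> x \<in> A \<and> y \<in> A \<and> tgt x = src y"

definition sig1 :: "('a \<Rightarrow> 'a \<Rightarrow> 'a \<times> 'a) \<Rightarrow> 'a \<times> 'a \<times> 'a \<Rightarrow> 'a \<times> 'a \<times> 'a" where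
  "sig1 sigma t = (case t of (x, y, z) \<Rightarrow> (fst (sigma x y), snd (sigma x y), z))"

definition sig2 :: "('a \<Rightarrow> 'a \<Rightarrow> 'a \<times> 'a) \<Rightarrow> 'a \<times> 'a \<times> 'a \<Rightarrow> 'a \<times> 'a \<times> 'a" where
  "sig2 sigma t = (case t of (x, y, z) \<Rightarrow> (x, fst (sigma y z), snd (sigma y z)))"

definition qybm ::
  "'v set \<Rightarrow> 'a set \<Rightarrow> ('a \<Rightarrow> 'v) \<Rightarrow> ('a \<Rightarrow> 'v) \<Rightarrow> ('a \<Rightarrow> 'a \<Rightarrow> 'a \<times> 'a) \<Rightarrow> bool" where
  "qybm Lam A src tgt sigma \<longleftrightarrow>
     quiver Lam A src tgt \<and>
     (\<forall>x y. composable A src tgt x y \<longrightarrow>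
        fst (sigma x y) \<in> A \<and> snd (sigma x y) \<in> A \<and>
        src (fst (sigma x y)) = src x \<and>
        tgt (fst (sigma x y)) = src (snd (sigma x y)) \<and>
        tgt (snd (sigma x y)) = tgt y) \<and>
     (\<forall>x y z. composable A src tgt x y \<and> composable A src tgt y z \<longrightarrow>
        sig1 sigma (sig2 sigma (sig1 sigma (x, y, z))) =
        sig2 sigma (sig1 sigma (sig2 sigma (x, y, z))))"

definition involutive ::
  "'a set \<Rightarrow> ('a \<Rightarrow> 'v) \<Rightarrow> ('a \<Rightarrow> 'v) \<Rightarrow> ('a \<Rightarrow> 'a \<Rightarrow> 'a \<times> 'a) \<Rightarrow> bool" where
  "involutive A src tgt sigma \<longleftrightarrow>
     (\<forall>x y. composable A src tgt x y \<longrightarrow> sigma (fst (sigma x y)) (snd (sigma x y)) = (x, y))"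

definition nondegenerate ::
  "'a set \<Rightarrow> ('a \<Rightarrow> 'v) \<Rightarrow> ('a \<Rightarrow> 'v) \<Rightarrow> ('a \<Rightarrow> 'a \<Rightarrow> 'a \<times> 'a) \<Rightarrow> bool" where
  "nondegenerate A src tgt sigma \<longleftrightarrow>
     (\<forall>x\<in>A. bij_betw (\<lambda>y. fst (sigma x y)) {y\<in>A. src y = tgt x} {y\<in>A. src y = src x}) \<and>
     (\<forall>y\<in>A. bij_betw (\<lambda>x. snd (sigma x y)) {x\<in>A. tgt x = src y} {x\<in>A. tgt x = tgt y})"

fun chain :: "('a \<Rightarrow> 'v) \<Rightarrow> ('a \<Rightarrow> 'v) \<Rightarrow> 'v \<Rightarrow> 'a list \<Rightarrow> bool" where
  "chain src tgt v [] = True"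
| "chain src tgt v (x # xs) = (src x = v \<and> chain src tgt (tgt x) xs)"

definition is_path ::
  "'v set \<Rightarrow> 'a set \<Rightarrow> ('a \<Rightarrow> 'v) \<Rightarrow> ('a \<Rightarrow> 'v) \<Rightarrow> 'v \<times> 'a list \<Rightarrow> bool" where
  "is_path Lam A src tgt p \<longleftrightarrow> fst p \<in> Lam \<and> set (snd p) \<subseteq> A \<and> chain src tgt (fst p) (snd p)"

definition ptgt :: "('a \<Rightarrow> 'v) \<Rightarrow> 'v \<times> 'a list \<Rightarrow> 'v" where
  "ptgt tgt p = (if snd p = [] then fst p else tgt (last (snd p)))"

inductive ystep for Lam A src tgt sigma where
  "is_path Lam A src tgt (v, u @ [x, y] @ w) \<Longrightarrow>
   ystep Lam A src tgt sigma (v, u @ [x, y] @ w) (v, u @ [fst (sigma x y), snd (sigma x y)] @ w)"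

definition peq where
  "peq Lam A src tgt sigma =
     (\<lambda>p q. (\<lambda>a b. ystep Lam A src tgt sigma a b \<or> ystep Lam A src tgt sigma b a)\<^sup>*\<^sup>* p q)"

definition cls where
  "cls Lam A src tgt sigma p = {q. peq Lam A src tgt sigma p q}"

definition Mor where
  "Mor Lam A src tgt sigma = cls Lam A src tgt sigma ` {p. is_path Lam A src tgt p}"

definition ldiv where
  "ldiv Lam A src tgt sigma f g \<longleftrightarrow>
     (\<exists>p r. is_path Lam A src tgt p \<and> is_path Lam A src tgt r \<and> fst r = ptgt tgt p \<and>
        f = cls Lam A src tgt sigma p \<and> g = cls Lam A src tgt sigma (fst p, snd p @ snd r))"

definition is_rlcm where
  "is_rlcm Lam A src tgt sigma f g m \<longleftrightarrow>
     ldiv Lam A src tgt sigma f m \<and> ldiv Lam A src tgt sigma g m \<and>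
     (\<forall>m'\<in>Mor Lam A src tgt sigma.
        ldiv Lam A src tgt sigma f m' \<and> ldiv Lam A src tgt sigma g m' \<longrightarrow>
        ldiv Lam A src tgt sigma m m')"

text \<open>Closure of (the image of) A, together with identities (right-lcms of empty families),
  under right-lcms.\<close>
inductive_set rlcm_closure for Lam A src tgt sigma where
  idn: "v \<in> Lam \<Longrightarrow> cls Lam A src tgt sigma (v, []) \<in> rlcm_closure Lam A src tgt sigma"
| gen: "x \<in> A \<Longrightarrow> cls Lam A src tgt sigma (src x, [x]) \<in> rlcm_closure Lam A src tgt sigma"
| lcm: "f \<in> rlcm_closure Lam A src tgt sigma \<Longrightarrow> g \<in> rlcm_closure Lam A src tgt sigma \<Longrightarrow>
        is_rlcm Lam A src tgt sigma f g m \<Longrightarrow> m \<in> rlcm_closure Lam A src tgt sigma"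

definition bullet where
  "bullet A src tgt sigma x y = inv_into {z\<in>A. tgt z = src x} (\<lambda>z. snd (sigma z x)) y"

definition tstar where
  "tstar A src tgt sigma x y = bullet A src tgt sigma y x"

fun Omega :: "'a set \<Rightarrow> ('a \<Rightarrow> 'v) \<Rightarrow> ('a \<Rightarrow> 'v) \<Rightarrow> ('a \<Rightarrow> 'a \<Rightarrow> 'a \<times> 'a) \<Rightarrow> 'a list \<Rightarrow> 'a" where
  "Omega A src tgt sigma [] = undefined"
| "Omega A src tgt sigma [y] = y"
| "Omega A src tgt sigma (y1 # y2 # ys) =
     tstar A src tgt sigma (Omega A src tgt sigma (y1 # ys)) (Omega A src tgt sigma (y2 # ys))"

fun Omegas where
  "Omegas A src tgt sigma [] = []"
| "Omegas A src tgt sigma (y # ys) = Omega A src tgt sigma (y # ys) # Omegas A src tgt sigma ys"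

definition Delta where
  "Delta Lam A src tgt sigma ys =
     cls Lam A src tgt sigma (src (Omega A src tgt sigma ys), Omegas A src tgt sigma ys)"

end

theory Submission
  imports Defs "HOL-Library.Multiset"
begin

text \<open>Let \<open>\<Phi>(x\<^sub>1 \<dots> x\<^sub>n) = {x\<^sub>1, x\<^sub>1 \<rightharpoonup> x\<^sub>2, x\<^sub>1 \<rightharpoonup> (x\<^sub>2 \<rightharpoonup> x\<^sub>3), \<dots>}\<close> be the multiset of
  atoms left-dividing a path. For an involutive non-degenerate solution, \<open>\<Phi>\<close> is invariant under
  the defining relations, determines the class of a path with given source, takes every finite
  multiset of arrows out of that source as a value, and turns left divisibility into multiset
  inclusion. Hence right-lcms correspond to unions of multisets, and the right-lcm closure of the
  atoms consists of the identities and the classes whose \<open>\<Phi>\<close> has no repetitions. Applied to the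
  opposite solution, the same argument yields the multiset \<open>\<Psi>\<close> of right-dividing atoms. A
  repetition in \<open>\<Phi>\<close> or in \<open>\<Psi>\<close> amounts to a factor \<open>x|y\<close> with \<open>\<sigma>(x, y) = (x, y)\<close> in some
  representative, so \<open>\<Phi>\<close> is repetition-free iff \<open>\<Psi>\<close> is. Finally, \<open>\<Delta>\<^sub>J\<close> is the class of a
  path ending at \<open>\<mu>\<close> with \<open>\<Psi> = J\<close>, and \<open>\<Psi>\<close> determines a class with given target.\<close>

lemma chain_append:
  "chain src tgt v (xs @ ys) \<longleftrightarrow> chain src tgt v xs \<and> chain src tgt (ptgt tgt (v, xs)) ys"
  by (induction xs arbitrary: v) (auto simp: ptgt_def)

lemma ptgt_Cons [simp]: "ptgt tgt (v, x # xs) = ptgt tgt (tgt x, xs)"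
  by (simp add: ptgt_def)

lemma is_path_Cons:
  assumes "quiver Lam A src tgt"
  shows "is_path Lam A src tgt (v, x # xs) \<longleftrightarrow> x \<in> A \<and> src x = v \<and> is_path Lam A src tgt (tgt x, xs)"
  using assms by (auto simp: is_path_def quiver_def)

lemma is_path_append:
  "is_path Lam A src tgt (v, xs) \<Longrightarrow> is_path Lam A src tgt (ptgt tgt (v, xs), ys) \<Longrightarrow>
   is_path Lam A src tgt (v, xs @ ys)"
  by (auto simp: is_path_def chain_append)

lemma ptgt_in_vertices:
  assumes "quiver Lam A src tgt" "is_path Lam A src tgt p"
  shows "ptgt tgt p \<in> Lam"
  using assms by (auto simp: is_path_def ptgt_def quiver_def) (meson last_in_set subsetD)

lemma ystep_is_path: "ystep Lam A src tgt s p q \<Longrightarrow> is_path Lam A src tgt p"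
  by (induction rule: ystep.induct)

lemma ystep_fst: "ystep Lam A src tgt s p q \<Longrightarrow> fst q = fst p"
  by (induction rule: ystep.induct) auto

lemma peq_refl [simp]: "peq Lam A src tgt s p p"
  by (simp add: peq_def)

lemma peq_trans: "peq Lam A src tgt s p q \<Longrightarrow> peq Lam A src tgt s q r \<Longrightarrow> peq Lam A src tgt s p r"
  unfolding peq_def by (rule rtranclp_trans)

lemma peq_sym: "peq Lam A src tgt s p q \<Longrightarrow> peq Lam A src tgt s q p"
  unfolding peq_def by (rule sympD[OF symp_rtranclp]) (auto intro: sympI)

lemma cls_eq_iff: "cls Lam A src tgt s p = cls Lam A src tgt s q \<longleftrightarrow> peq Lam A src tgt s p q"
proof
  assume "cls Lam A src tgt s p = cls Lam A src tgt s q"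
  then show "peq Lam A src tgt s p q"
    unfolding cls_def by (metis mem_Collect_eq peq_refl)
qed (auto simp: cls_def intro: peq_trans peq_sym)

definition distinct_mset :: "'a multiset \<Rightarrow> bool" where
  "distinct_mset M \<longleftrightarrow> (\<forall>x. count M x \<le> 1)"

lemma distinct_mset_sup: "distinct_mset M \<Longrightarrow> distinct_mset N \<Longrightarrow> distinct_mset (M \<union># N)"
  by (simp add: distinct_mset_def)

lemma distinct_mset_add_mset:
  "distinct_mset (add_mset x M) \<longleftrightarrow> x \<notin># M \<and> distinct_mset M"
proof -
  have "count (add_mset x M) y \<le> 1 \<longleftrightarrow> (if y = x then count M x = 0 else count M y \<le> 1)" for y
    by auto
  then show ?thesis
    unfolding distinct_mset_def by (auto simp: count_eq_zero_iff[symmetric])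
qed

lemma distinct_mset_mset [simp]: "distinct_mset (mset xs) \<longleftrightarrow> distinct xs"
  by (induction xs) (simp_all add: distinct_mset_add_mset, simp add: distinct_mset_def)

lemma bij_betw_image_mset_surj:
  assumes "bij_betw f S T" "set_mset M \<subseteq> T"
  obtains N where "set_mset N \<subseteq> S" "image_mset f N = M"
proof
  show "set_mset (image_mset (inv_into S f) M) \<subseteq> S"
    using assms by (auto simp: bij_betw_def intro: inv_into_into)
  have "image_mset f (image_mset (inv_into S f) M) = image_mset id M"
    unfolding multiset.map_comp
    by (rule image_mset_cong) (use assms in \<open>auto simp: bij_betw_def f_inv_into_f\<close>)
  then show "image_mset f (image_mset (inv_into S f) M) = M" by simp
qed

lemma image_mset_inj_on_eq:
  assumes "inj_on f S" "set_mset M \<subseteq> S" "set_mset N \<subseteq> S" "image_mset f M = image_mset f N"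
  shows "M = N"
  using image_mset_eq_image_mset_plusD[of f M N "{#}"] inj_on_subset[OF assms(1)] assms(2-4)
  by auto

text \<open>\<open>\<Phi>\<close>: the atoms left-dividing the class of a path, with multiplicity.\<close>

fun left_atoms :: "('a \<Rightarrow> 'a \<Rightarrow> 'a \<times> 'a) \<Rightarrow> 'a list \<Rightarrow> 'a multiset" where
  "left_atoms s [] = {#}"
| "left_atoms s (x # xs) = add_mset x (image_mset (\<lambda>y. fst (s x y)) (left_atoms s xs))"

fun left_act :: "('a \<Rightarrow> 'a \<Rightarrow> 'a \<times> 'a) \<Rightarrow> 'a list \<Rightarrow> 'a \<Rightarrow> 'a" where
  "left_act s [] = id"
| "left_act s (x # xs) = (\<lambda>y. fst (s x y)) \<circ> left_act s xs"

lemma left_act_append: "left_act s (xs @ ys) = left_act s xs \<circ> left_act s ys"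
  by (induction xs) auto

lemma left_atoms_append:
  "left_atoms s (xs @ ys) = left_atoms s xs + image_mset (left_act s xs) (left_atoms s ys)"
  by (induction xs) (auto simp: multiset.map_comp o_def)

lemma size_left_atoms [simp]: "size (left_atoms s xs) = length xs"
  by (induction xs) auto

lemma not_distinct_left_atoms_fixed_factor:
  assumes "fst (s a b) = a"
  shows "\<not> distinct_mset (left_atoms s (u @ [a, b] @ w))"
proof -
  have "count (left_atoms s (u @ [a, b] @ w)) (left_act s u a) \<ge> 2"
    using assms by (simp add: left_atoms_append)
  then show ?thesis
    unfolding distinct_mset_def not_all not_le by (intro exI[of _ "left_act s u a"]) simp
qed

section \<open>The opposite solution and reversed paths\<close>

definition opp :: "('a \<Rightarrow> 'a \<Rightarrow> 'a \<times> 'a) \<Rightarrow> 'a \<Rightarrow> 'a \<Rightarrow> 'a \<times> 'a" where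
  "opp s x y = prod.swap (s y x)"

lemma opp_opp [simp]: "opp (opp s) = s"
  by (simp add: opp_def fun_eq_iff)

definition rev_triple :: "'a \<times> 'a \<times> 'a \<Rightarrow> 'a \<times> 'a \<times> 'a" where
  "rev_triple t = (snd (snd t), fst (snd t), fst t)"

lemma sig1_opp: "sig1 (opp s) (rev_triple t) = rev_triple (sig2 s t)"
  by (simp add: sig1_def sig2_def opp_def rev_triple_def case_prod_beta)

lemma sig2_opp: "sig2 (opp s) (rev_triple t) = rev_triple (sig1 s t)"
  by (simp add: sig1_def sig2_def opp_def rev_triple_def case_prod_beta)

lemma composable_opp: "composable A tgt src x y \<longleftrightarrow> composable A src tgt y x"
  by (auto simp: composable_def)

lemma qybm_opp:
  assumes "qybm Lam A src tgt s"
  shows "qybm Lam A tgt src (opp s)"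
proof -
  have "quiver Lam A tgt src"
    using assms by (auto simp: qybm_def quiver_def)
  moreover have "fst (opp s x y) \<in> A \<and> snd (opp s x y) \<in> A \<and>
      tgt (fst (opp s x y)) = tgt x \<and> src (fst (opp s x y)) = tgt (snd (opp s x y)) \<and>
      src (snd (opp s x y)) = src y" if "composable A tgt src x y" for x y
    using assms that by (auto simp: qybm_def opp_def composable_opp)
  moreover have "sig1 (opp s) (sig2 (opp s) (sig1 (opp s) (x, y, z))) =
      sig2 (opp s) (sig1 (opp s) (sig2 (opp s) (x, y, z)))"
    if "composable A tgt src x y" "composable A tgt src y z" for x y z
  proof -
    have "sig1 s (sig2 s (sig1 s (z, y, x))) = sig2 s (sig1 s (sig2 s (z, y, x)))"
      using assms that by (simp add: qybm_def composable_opp)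
    then show ?thesis
      using sig1_opp sig2_opp by (metis rev_triple_def fst_conv snd_conv)
  qed
  ultimately show ?thesis
    unfolding qybm_def by blast
qed

lemma involutive_opp: "involutive A src tgt s \<Longrightarrow> involutive A tgt src (opp s)"
  by (simp add: involutive_def opp_def composable_opp prod.swap_def)

lemma nondegenerate_opp: "nondegenerate A src tgt s \<Longrightarrow> nondegenerate A tgt src (opp s)"
  by (simp add: nondegenerate_def opp_def)

definition rev_path :: "('a \<Rightarrow> 'v) \<Rightarrow> 'v \<times> 'a list \<Rightarrow> 'v \<times> 'a list" where
  "rev_path tgt p = (ptgt tgt p, rev (snd p))"

lemma chain_rev: "chain src tgt v xs \<Longrightarrow> chain tgt src (ptgt tgt (v, xs)) (rev xs)"
proof (induction xs arbitrary: v)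
  case (Cons x xs)
  have "ptgt src (ptgt tgt (tgt x, xs), rev xs) = tgt x"
    using Cons.prems by (cases xs) (auto simp: ptgt_def last_rev)
  then show ?case
    using Cons by (simp add: chain_append)
qed simp

lemma rev_path_rev_path:
  "chain src tgt (fst p) (snd p) \<Longrightarrow> rev_path src (rev_path tgt p) = p"
  by (cases p; cases "snd p") (auto simp: rev_path_def ptgt_def last_rev)

lemma is_path_rev_path:
  assumes "quiver Lam A src tgt" "is_path Lam A src tgt p"
  shows "is_path Lam A tgt src (rev_path tgt p)"
  using assms ptgt_in_vertices[OF assms] chain_rev[of src tgt "fst p" "snd p"]
  by (auto simp: is_path_def rev_path_def)

lemma ystep_rev_path:
  assumes "qybm Lam A src tgt s" "ystep Lam A src tgt s p q"
  shows "ystep Lam A tgt src (opp s) (rev_path tgt p) (rev_path tgt q)"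
  using assms(2)
proof (cases rule: ystep.cases)
  case (1 v u x y w)
  have quiv: "quiver Lam A src tgt"
    using assms(1) by (simp add: qybm_def)
  have xy: "composable A src tgt x y"
    using 1 by (auto simp: composable_def is_path_def chain_append)
  then have "ptgt tgt q = ptgt tgt p"
    using 1 assms(1) by (cases w) (auto simp: ptgt_def qybm_def)
  moreover have "is_path Lam A tgt src (ptgt tgt p, rev w @ [y, x] @ rev u)"
    using is_path_rev_path[OF quiv] 1 by (fastforce simp: rev_path_def)
  ultimately show ?thesis
    using ystep.intros[of Lam A tgt src "ptgt tgt p" "rev w" y x "rev u" "opp s"] 1
    by (simp add: rev_path_def opp_def)
qed

lemma peq_rev_path:
  assumes "qybm Lam A src tgt s" "peq Lam A src tgt s p q"
  shows "peq Lam A tgt src (opp s) (rev_path tgt p) (rev_path tgt q)"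
  using assms(2) unfolding peq_def
proof (induction rule: rtranclp_induct)
  case (step q r)
  then show ?case
    using ystep_rev_path[OF assms(1)] by (metis (mono_tags, lifting) rtranclp.rtrancl_into_rtrancl)
qed simp

section \<open>Left atoms determine classes\<close>

text \<open>The half of the axioms of an involutive non-degenerate solution that governs the left
  actions \<open>x \<rightharpoonup> \<cdot>\<close>. A solution satisfies it, and so does its opposite on the reversed quiver,
  which turns statements about left divisors into statements about right divisors.\<close>

locale left_solution =
  fixes Lam :: "'v set" and A :: "'a set" and src tgt :: "'a \<Rightarrow> 'v"
    and sigma :: "'a \<Rightarrow> 'a \<Rightarrow> 'a \<times> 'a"
  assumes quiver: "quiver Lam A src tgt"
    and typing: "\<And>x y. composable A src tgt x y \<Longrightarrow>
        fst (sigma x y) \<in> A \<and> snd (sigma x y) \<in> A \<and> src (fst (sigma x y)) = src x \<and>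
        tgt (fst (sigma x y)) = src (snd (sigma x y)) \<and> tgt (snd (sigma x y)) = tgt y"
    and left_involutive: "\<And>x y. composable A src tgt x y \<Longrightarrow>
        fst (sigma (fst (sigma x y)) (snd (sigma x y))) = x"
    and left_braid: "\<And>x y z. composable A src tgt x y \<Longrightarrow> composable A src tgt y z \<Longrightarrow>
        fst (sigma x (fst (sigma y z))) =
        fst (sigma (fst (sigma x y)) (fst (sigma (snd (sigma x y)) z)))"
    and left_nondegenerate: "\<And>x. x \<in> A \<Longrightarrow>
        bij_betw (\<lambda>y. fst (sigma x y)) {y\<in>A. src y = tgt x} {y\<in>A. src y = src x}"

lemma qybm_left_solution:
  assumes "qybm Lam A src tgt sigma" "involutive A src tgt sigma" "nondegenerate A src tgt sigma"
  shows "left_solution Lam A src tgt sigma"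
proof
  fix x y z assume "composable A src tgt x y" "composable A src tgt y z"
  then have "sig1 sigma (sig2 sigma (sig1 sigma (x, y, z))) = sig2 sigma (sig1 sigma (sig2 sigma (x, y, z)))"
    using assms(1) by (simp add: qybm_def)
  then show "fst (sigma x (fst (sigma y z))) =
      fst (sigma (fst (sigma x y)) (fst (sigma (snd (sigma x y)) z)))"
    by (simp add: sig1_def sig2_def case_prod_beta)
qed (use assms in \<open>auto simp: qybm_def nondegenerate_def involutive_def\<close>)

context left_solution
begin

abbreviation path :: "'v \<times> 'a list \<Rightarrow> bool" where
  "path \<equiv> is_path Lam A src tgt"

abbreviation path_eq :: "'v \<times> 'a list \<Rightarrow> 'v \<times> 'a list \<Rightarrow> bool" where
  "path_eq \<equiv> peq Lam A src tgt sigma"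

abbreviation cl :: "'v \<times> 'a list \<Rightarrow> ('v \<times> 'a list) set" where
  "cl \<equiv> cls Lam A src tgt sigma"

abbreviation out :: "'v \<Rightarrow> 'a set" where
  "out v \<equiv> {y\<in>A. src y = v}"

lemma path_Cons: "path (v, x # xs) \<longleftrightarrow> x \<in> A \<and> src x = v \<and> path (tgt x, xs)"
  by (rule is_path_Cons[OF quiver])

lemma set_left_atoms: "path (v, xs) \<Longrightarrow> set_mset (left_atoms sigma xs) \<subseteq> out v"
proof (induction xs arbitrary: v)
  case (Cons x xs)
  then show ?case
    using typing by (fastforce simp: path_Cons composable_def)
qed simp

lemma bij_left_act: "path (v, xs) \<Longrightarrow> bij_betw (left_act sigma xs) (out (ptgt tgt (v, xs))) (out v)"
proof (induction xs arbitrary: v)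
  case Nil
  then show ?case by (simp add: ptgt_def bij_betw_def)
next
  case (Cons x xs)
  then have "bij_betw (left_act sigma xs) (out (ptgt tgt (tgt x, xs))) (out (tgt x))"
    by (simp add: path_Cons)
  moreover have "bij_betw (\<lambda>y. fst (sigma x y)) (out (tgt x)) (out v)"
    using Cons.prems left_nondegenerate by (auto simp: path_Cons)
  ultimately show ?case
    unfolding left_act.simps ptgt_Cons by (rule bij_betw_trans)
qed

lemma left_atoms_braid_factor:
  assumes "composable A src tgt x y" "path (tgt y, w)"
  shows "left_atoms sigma (fst (sigma x y) # snd (sigma x y) # w) = left_atoms sigma (x # y # w)"
proof -
  have "fst (sigma (fst (sigma x y)) (fst (sigma (snd (sigma x y)) z))) = fst (sigma x (fst (sigma y z)))"
    if "z \<in># left_atoms sigma w" for z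
    using left_braid[OF assms(1), of z] set_left_atoms[OF assms(2)] that assms(1)
    by (auto simp: composable_def)
  then have "image_mset (\<lambda>z. fst (sigma (fst (sigma x y)) (fst (sigma (snd (sigma x y)) z)))) (left_atoms sigma w) =
      image_mset (\<lambda>z. fst (sigma x (fst (sigma y z)))) (left_atoms sigma w)"
    by (rule image_mset_cong)
  then show ?thesis
    using left_involutive[OF assms(1)] by (simp add: multiset.map_comp o_def add_mset_commute)
qed

lemma ystep_invariants:
  assumes "ystep Lam A src tgt sigma p q"
  shows "path q \<and> fst q = fst p \<and> left_atoms sigma (snd q) = left_atoms sigma (snd p)"
  using assms
proof (cases rule: ystep.cases)
  case (1 v u x y w)
  then have xy: "composable A src tgt x y" and w: "path (tgt y, w)"
    and u: "path (v, u)" "src x = ptgt tgt (v, u)"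
    using quiver by (auto simp: composable_def is_path_def chain_append quiver_def)
  have "path (v, u @ [fst (sigma x y), snd (sigma x y)] @ w)"
    using typing[OF xy] u w by (auto simp: is_path_def chain_append composable_def)
  then show ?thesis
    using 1 left_atoms_braid_factor[OF xy w] by (simp add: left_atoms_append)
qed

lemma path_eq_invariants:
  assumes "path_eq p q" "path p"
  shows "path q \<and> fst q = fst p \<and> left_atoms sigma (snd q) = left_atoms sigma (snd p)"
  using assms unfolding peq_def
proof (induction rule: rtranclp_induct)
  case (step q r)
  then show ?case
    using ystep_invariants ystep_is_path by metis
qed simp

lemma ystep_Cons:
  assumes "ystep Lam A src tgt sigma p q" "x \<in> A" "tgt x = fst p"
  shows "ystep Lam A src tgt sigma (src x, x # snd p) (src x, x # snd q)"
  using assms(1)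
proof (cases rule: ystep.cases)
  case (1 v u y z w)
  then have "path (src x, (x # u) @ [y, z] @ w)"
    using assms(2,3) by (simp add: path_Cons)
  from ystep.intros[OF this] show ?thesis
    using 1 by simp
qed

lemma path_eq_Cons:
  assumes "path_eq (tgt x, xs) (w, ys)" "x \<in> A"
  shows "path_eq (src x, x # xs) (src x, x # ys)"
proof -
  have "path_eq (src x, x # snd p) (src x, x # snd q) \<and> fst q = tgt x"
    if "path_eq p q" "fst p = tgt x" for p q
    using that unfolding peq_def
  proof (induction rule: rtranclp_induct)
    case (step q r)
    then have "ystep Lam A src tgt sigma (src x, x # snd q) (src x, x # snd r) \<or>
        ystep Lam A src tgt sigma (src x, x # snd r) (src x, x # snd q)"
      using ystep_Cons[OF _ assms(2)] ystep_fst by metis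
    with step show ?case
      using ystep_fst by (metis (mono_tags, lifting) rtranclp.rtrancl_into_rtrancl)
  qed simp
  then show ?thesis
    using assms(1) by fastforce
qed

lemma path_eq_left_atom:
  assumes "path (v, xs)" "z \<in># left_atoms sigma xs"
  shows "\<exists>ws. path_eq (v, xs) (v, z # ws)"
  using assms
proof (induction xs arbitrary: v z)
  case (Cons x xs)
  then have x: "x \<in> A" "src x = v" "path (tgt x, xs)"
    by (auto simp: path_Cons)
  show ?case
  proof (cases "z = x")
    case False
    with Cons.prems(2) obtain y where y: "y \<in># left_atoms sigma xs" "z = fst (sigma x y)"
      by auto
    from Cons.IH[OF x(3) y(1)] obtain ws where "path_eq (tgt x, xs) (tgt x, y # ws)"
      by blast
    then have xy: "path_eq (v, x # xs) (v, x # y # ws)"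
      using path_eq_Cons x by blast
    then have "path (v, [] @ [x, y] @ ws)"
      using path_eq_invariants Cons.prems(1) by auto
    from ystep.intros[OF this] have "path_eq (v, x # y # ws) (v, z # snd (sigma x y) # ws)"
      using y(2) by (simp add: peq_def r_into_rtranclp)
    with xy show ?thesis
      using peq_trans by blast
  qed (use peq_refl in blast)
qed simp

lemma left_atoms_Cons_cancel:
  assumes "path (v, x # xs)" "path (v, x # ys)"
    and "left_atoms sigma (x # xs) = left_atoms sigma (x # ys)"
  shows "left_atoms sigma xs = left_atoms sigma ys"
proof (rule image_mset_inj_on_eq)
  show "inj_on (\<lambda>y. fst (sigma x y)) (out (tgt x))"
    using left_nondegenerate assms(1) by (auto simp: path_Cons bij_betw_def)
  show "set_mset (left_atoms sigma xs) \<subseteq> out (tgt x)" "set_mset (left_atoms sigma ys) \<subseteq> out (tgt x)"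
    using set_left_atoms assms(1,2) by (auto simp: path_Cons)
qed (use assms(3) in simp)

theorem path_eq_iff_left_atoms:
  assumes "path (v, xs)" "path (v, ys)"
  shows "path_eq (v, xs) (v, ys) \<longleftrightarrow> left_atoms sigma xs = left_atoms sigma ys"
proof
  show "path_eq (v, xs) (v, ys) \<Longrightarrow> left_atoms sigma xs = left_atoms sigma ys"
    using path_eq_invariants assms(1) by fastforce
next
  show "left_atoms sigma xs = left_atoms sigma ys \<Longrightarrow> path_eq (v, xs) (v, ys)"
    using assms
  \<comment> \<open>move the first arrow of \<open>ys\<close>, a left atom of \<open>xs\<close>, to the front of \<open>xs\<close> and cancel it\<close>
  proof (induction "length xs" arbitrary: v xs ys)
    case 0
    then show ?case
      using size_left_atoms[of sigma ys] by simp
  next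
    case (Suc n)
    have "length ys = Suc n"
      using Suc.hyps(2) Suc.prems(1) by (metis size_left_atoms)
    then obtain y ys' where ys: "ys = y # ys'"
      by (cases ys) auto
    then have "y \<in># left_atoms sigma xs"
      using Suc.prems(1) by simp
    then obtain ws where xs: "path_eq (v, xs) (v, y # ws)"
      using path_eq_left_atom Suc.prems(2) by blast
    then have ws: "path (v, y # ws)" "left_atoms sigma (y # ws) = left_atoms sigma ys"
      using path_eq_invariants[OF xs Suc.prems(2)] Suc.prems(1) by (auto simp del: left_atoms.simps)
    then have "left_atoms sigma ws = left_atoms sigma ys'"
      using left_atoms_Cons_cancel Suc.prems(3) ys by blast
    moreover have "n = length ws"
      using Suc.hyps(2) ws(2) size_left_atoms[of sigma] ys Suc.prems(1) by (metis length_Cons nat.inject)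
    ultimately have "path_eq (tgt y, ws) (tgt y, ys')"
      using Suc.hyps(1) ws(1) Suc.prems(3) ys by (simp add: path_Cons)
    then have "path_eq (v, y # ws) (v, ys)"
      using path_eq_Cons ws(1) ys by (auto simp: path_Cons)
    with xs show ?case
      using peq_trans by blast
  qed
qed

lemma left_atoms_surj:
  assumes "v \<in> Lam" "set_mset M \<subseteq> out v"
  obtains xs where "path (v, xs)" "left_atoms sigma xs = M"
proof -
  have "\<exists>xs. path (v, xs) \<and> left_atoms sigma xs = M"
    using assms
  proof (induction "size M" arbitrary: M v)
    case 0
    then show ?case by (intro exI[of _ "[]"]) (simp add: is_path_def)
  next
    case (Suc n)
    then obtain x M0 where M: "M = add_mset x M0"
      by (metis size_eq_Suc_imp_eq_union)
    with Suc.prems have x: "x \<in> A" "src x = v" "set_mset M0 \<subseteq> out v"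
      by auto
    obtain N where N: "set_mset N \<subseteq> out (tgt x)" "image_mset (\<lambda>y. fst (sigma x y)) N = M0"
      by (rule bij_betw_image_mset_surj[OF left_nondegenerate[OF x(1)]]) (use x in simp)
    moreover have "tgt x \<in> Lam"
      using quiver x by (simp add: quiver_def)
    moreover have "n = size N"
      using Suc.hyps(2) M N(2) by auto
    ultimately obtain xs where "path (tgt x, xs)" "left_atoms sigma xs = N"
      using Suc.hyps(1) by blast
    then show ?case
      using x M N by (intro exI[of _ "x # xs"]) (simp add: path_Cons)
  qed
  with that show ?thesis by blast
qed

lemma path_eq_append_complement:
  assumes "path (v, xs)" "path (v, ys)" "left_atoms sigma xs \<subseteq># left_atoms sigma ys"
  obtains zs where "path (ptgt tgt (v, xs), zs)" "path_eq (v, ys) (v, xs @ zs)"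
proof -
  let ?w = "ptgt tgt (v, xs)" and ?D = "left_atoms sigma ys - left_atoms sigma xs"
  have "set_mset ?D \<subseteq> out v"
    using set_left_atoms[OF assms(2)] by (auto dest: in_diffD)
  then obtain N where N: "set_mset N \<subseteq> out ?w" "image_mset (left_act sigma xs) N = ?D"
    by (rule bij_betw_image_mset_surj[OF bij_left_act[OF assms(1)]])
  obtain zs where zs: "path (?w, zs)" "left_atoms sigma zs = N"
    using left_atoms_surj[OF ptgt_in_vertices[OF quiver assms(1)] N(1)] by blast
  have "left_atoms sigma (xs @ zs) = left_atoms sigma ys"
    using zs N assms(3) by (simp add: left_atoms_append subset_mset.add_diff_inverse)
  then have "path_eq (v, ys) (v, xs @ zs)"
    using path_eq_iff_left_atoms assms(1,2) is_path_append[OF assms(1) zs(1)] by simp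
  with zs that show ?thesis by blast
qed

theorem ldiv_cls_iff:
  assumes "path p" "path q"
  shows "ldiv Lam A src tgt sigma (cl p) (cl q) \<longleftrightarrow>
    fst q = fst p \<and> left_atoms sigma (snd p) \<subseteq># left_atoms sigma (snd q)"
proof
  assume "ldiv Lam A src tgt sigma (cl p) (cl q)"
  then obtain p' r where r: "path p'" "path r" "cl p = cl p'" "cl q = cl (fst p', snd p' @ snd r)"
    unfolding ldiv_def by blast
  then have "path_eq p p'" "path_eq q (fst p', snd p' @ snd r)"
    by (simp_all add: cls_eq_iff)
  note p' = path_eq_invariants[OF this(1) assms(1)] and q = path_eq_invariants[OF this(2) assms(2)]
  have "left_atoms sigma (snd p) = left_atoms sigma (snd p')"
    using p' by simp
  also have "\<dots> \<subseteq># left_atoms sigma (snd p' @ snd r)"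
    by (simp add: left_atoms_append)
  also have "\<dots> = left_atoms sigma (snd q)"
    using q by simp
  finally show "fst q = fst p \<and> left_atoms sigma (snd p) \<subseteq># left_atoms sigma (snd q)"
    using p' q by simp
next
  assume h: "fst q = fst p \<and> left_atoms sigma (snd p) \<subseteq># left_atoms sigma (snd q)"
  obtain v xs ys where pq: "p = (v, xs)" "q = (v, ys)"
    using h by (metis prod.collapse)
  obtain zs where zs: "path (ptgt tgt p, zs)" "path_eq (v, ys) (v, xs @ zs)"
    by (rule path_eq_append_complement[of v xs ys]) (use h assms pq in auto)
  then have "cl q = cl (fst p, snd p @ zs)"
    using pq by (simp add: cls_eq_iff)
  then show "ldiv Lam A src tgt sigma (cl p) (cl q)"
    unfolding ldiv_def using assms(1) zs(1) by fastforce
qed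

end

section \<open>The right-lcm closure\<close>

context left_solution
begin

lemma ldiv_clsE:
  assumes "ldiv Lam A src tgt sigma f m"
  obtains k where "path k" "m = cl k"
  using assms is_path_append unfolding ldiv_def by (metis prod.collapse)

lemma is_rlcm_cls_left_atoms:
  assumes "path p" "path q" "path k" "is_rlcm Lam A src tgt sigma (cl p) (cl q) (cl k)"
  shows "left_atoms sigma (snd k) = left_atoms sigma (snd p) \<union># left_atoms sigma (snd q)"
proof -
  have "ldiv Lam A src tgt sigma (cl p) (cl k)" "ldiv Lam A src tgt sigma (cl q) (cl k)"
    using assms(4) unfolding is_rlcm_def by blast+
  then have k: "fst k = fst p" "fst k = fst q"
    "left_atoms sigma (snd p) \<union># left_atoms sigma (snd q) \<subseteq># left_atoms sigma (snd k)"
    using ldiv_cls_iff[OF assms(1,3)] ldiv_cls_iff[OF assms(2,3)] by simp_all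
  have v: "fst p \<in> Lam"
    using assms(1) by (simp add: is_path_def)
  have "set_mset (left_atoms sigma (snd p) \<union># left_atoms sigma (snd q)) \<subseteq> out (fst p)"
    using set_left_atoms[of "fst p" "snd p"] set_left_atoms[of "fst q" "snd q"] assms(1,2) k(1,2)
    by auto
  then obtain h where h: "path (fst p, h)"
    "left_atoms sigma h = left_atoms sigma (snd p) \<union># left_atoms sigma (snd q)"
    by (rule left_atoms_surj[OF v])
  then have "ldiv Lam A src tgt sigma (cl p) (cl (fst p, h))"
    "ldiv Lam A src tgt sigma (cl q) (cl (fst p, h))"
    using ldiv_cls_iff[OF assms(1) h(1)] ldiv_cls_iff[OF assms(2) h(1)] k(1,2) by simp_all
  moreover have "cl (fst p, h) \<in> Mor Lam A src tgt sigma"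
    using h(1) by (auto simp: Mor_def)
  ultimately have "ldiv Lam A src tgt sigma (cl k) (cl (fst p, h))"
    using assms(4) unfolding is_rlcm_def by blast
  then have "left_atoms sigma (snd k) \<subseteq># left_atoms sigma h"
    using ldiv_cls_iff[OF assms(3) h(1)] by simp
  with k(3) h(2) show ?thesis
    by (simp add: subset_mset.antisym)
qed

lemma is_rlcm_clsI:
  assumes "path p" "path q" "path k" "fst p = fst k" "fst q = fst k"
    and "left_atoms sigma (snd k) = left_atoms sigma (snd p) \<union># left_atoms sigma (snd q)"
  shows "is_rlcm Lam A src tgt sigma (cl p) (cl q) (cl k)"
proof -
  have "ldiv Lam A src tgt sigma (cl k) m'"
    if m': "m' \<in> Mor Lam A src tgt sigma" "ldiv Lam A src tgt sigma (cl p) m'"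
      "ldiv Lam A src tgt sigma (cl q) m'" for m'
  proof -
    obtain k' where k': "path k'" "m' = cl k'"
      using m'(1) unfolding Mor_def by blast
    then show ?thesis
      using m'(2,3) ldiv_cls_iff[OF assms(1) k'(1)] ldiv_cls_iff[OF assms(2) k'(1)]
        ldiv_cls_iff[OF assms(3) k'(1)] assms(4-6) by simp
  qed
  moreover have "ldiv Lam A src tgt sigma (cl p) (cl k)" "ldiv Lam A src tgt sigma (cl q) (cl k)"
    using ldiv_cls_iff[OF assms(1,3)] ldiv_cls_iff[OF assms(2,3)] assms(4-6) by simp_all
  ultimately show ?thesis
    unfolding is_rlcm_def by blast
qed

lemma cls_in_rlcm_closure:
  assumes "path (v, xs)" "distinct_mset (left_atoms sigma xs)"
  shows "cl (v, xs) \<in> rlcm_closure Lam A src tgt sigma"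
  using assms
proof (induction "left_atoms sigma xs" arbitrary: xs rule: multiset_induct)
  case empty
  then have "xs = []" "v \<in> Lam"
    using size_left_atoms[of sigma xs] by (simp_all add: is_path_def)
  then show ?case
    by (simp add: rlcm_closure.idn)
next
  case (add x M)
  have xs: "left_atoms sigma xs = add_mset x M"
    using add.hyps(2) by simp
  then have x: "x \<in> A" "src x = v" and "set_mset M \<subseteq> out v"
    using set_left_atoms[OF add.prems(1)] by auto
  moreover have v: "v \<in> Lam"
    using add.prems(1) by (simp add: is_path_def)
  ultimately obtain ys where ys: "path (v, ys)" "left_atoms sigma ys = M"
    using left_atoms_surj by blast
  have "x \<notin># M" "distinct_mset M"
    using add.prems(2) xs by (simp_all add: distinct_mset_add_mset)
  have "cl (v, [x]) \<in> rlcm_closure Lam A src tgt sigma"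
    using x by (metis rlcm_closure.gen)
  moreover have "cl (v, ys) \<in> rlcm_closure Lam A src tgt sigma"
    using add.hyps(1)[of ys] ys \<open>distinct_mset M\<close> by simp
  moreover have "is_rlcm Lam A src tgt sigma (cl (v, [x])) (cl (v, ys)) (cl (v, xs))"
    using add.prems(1) xs ys x v \<open>x \<notin># M\<close> by (intro is_rlcm_clsI) (simp_all add: path_Cons is_path_def)
  ultimately show ?case
    by (rule rlcm_closure.lcm)
qed

theorem rlcm_closure_eq:
  "rlcm_closure Lam A src tgt sigma = {cl p | p. path p \<and> distinct_mset (left_atoms sigma (snd p))}"
proof (intro equalityI subsetI)
  fix f assume "f \<in> rlcm_closure Lam A src tgt sigma"
  then show "f \<in> {cl p | p. path p \<and> distinct_mset (left_atoms sigma (snd p))}"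
  proof (induction rule: rlcm_closure.induct)
    case (idn v)
    then show ?case
      by (intro CollectI exI[of _ "(v, [])"]) (simp add: is_path_def distinct_mset_def)
  next
    case (gen x)
    then show ?case
      using quiver by (intro CollectI exI[of _ "(src x, [x])"]) (simp add: is_path_def quiver_def distinct_mset_def)
  next
    case (lcm f g m)
    obtain p q where pq: "path p" "path q" "f = cl p" "g = cl q"
      "distinct_mset (left_atoms sigma (snd p))" "distinct_mset (left_atoms sigma (snd q))"
      using lcm.IH by blast
    obtain k where k: "path k" "m = cl k"
      using lcm.hyps(3) ldiv_clsE unfolding is_rlcm_def by blast
    then have "left_atoms sigma (snd k) = left_atoms sigma (snd p) \<union># left_atoms sigma (snd q)"
      using is_rlcm_cls_left_atoms[OF pq(1,2) k(1)] lcm.hyps(3) pq(3,4) by simp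
    with pq(5,6) k show ?case
      by (intro CollectI exI[of _ k]) (simp add: distinct_mset_sup)
  qed
next
  fix f assume "f \<in> {cl p | p. path p \<and> distinct_mset (left_atoms sigma (snd p))}"
  then show "f \<in> rlcm_closure Lam A src tgt sigma"
    using cls_in_rlcm_closure by auto
qed

end

section \<open>Right atoms\<close>

context left_solution
begin

lemma fixed_pair_snd:
  assumes "composable A src tgt x y" "fst (sigma x y) = x"
  shows "snd (sigma x y) = y"
proof -
  have "x \<in> A"
    using assms(1) by (simp add: composable_def)
  then have "inj_on (\<lambda>z. fst (sigma x z)) (out (tgt x))"
    using left_nondegenerate bij_betw_def by blast
  moreover have "fst (sigma x (snd (sigma x y))) = fst (sigma x y)"
    using left_involutive[OF assms(1)] assms(2) by simp
  moreover have "snd (sigma x y) \<in> out (tgt x)" "y \<in> out (tgt x)"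
    using typing[OF assms(1)] assms by (auto simp: composable_def)
  ultimately show ?thesis
    by (rule inj_onD)
qed

theorem not_distinct_left_atoms_iff:
  assumes "path (v, xs)"
  shows "\<not> distinct_mset (left_atoms sigma xs) \<longleftrightarrow>
    (\<exists>v' u a b w. path_eq (v, xs) (v', u @ [a, b] @ w) \<and> fst (sigma a b) = a)"
proof
  assume "\<not> distinct_mset (left_atoms sigma xs)"
  then obtain z where z: "count (left_atoms sigma xs) z > 1"
    unfolding distinct_mset_def by (auto simp: not_le)
  then have "z \<in># left_atoms sigma xs"
    by (simp add: count_inI)
  then obtain ws where ws: "path_eq (v, xs) (v, z # ws)"
    using path_eq_left_atom[OF assms] by blast
  have zws: "path (v, z # ws)" "left_atoms sigma (z # ws) = left_atoms sigma xs"
    using path_eq_invariants[OF ws assms] by (simp_all del: left_atoms.simps)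
  then have "z \<in># image_mset (\<lambda>y. fst (sigma z y)) (left_atoms sigma ws)"
    using z unfolding zws(2)[symmetric] by simp
  then obtain y where y: "y \<in># left_atoms sigma ws" "fst (sigma z y) = z"
    by auto
  from zws(1) have "path (tgt z, ws)" "z \<in> A" "src z = v"
    by (simp_all add: path_Cons)
  moreover obtain ws' where "path_eq (tgt z, ws) (tgt z, y # ws')"
    using path_eq_left_atom[OF _ y(1)] calculation(1) by blast
  ultimately have "path_eq (v, z # ws) (v, z # y # ws')"
    using path_eq_Cons by blast
  then have "path_eq (v, xs) (v, [] @ [z, y] @ ws')"
    using ws peq_trans by simp
  with y(2) show "\<exists>v' u a b w. path_eq (v, xs) (v', u @ [a, b] @ w) \<and> fst (sigma a b) = a"
    by blast
next
  assume "\<exists>v' u a b w. path_eq (v, xs) (v', u @ [a, b] @ w) \<and> fst (sigma a b) = a"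
  then obtain v' u a b w where uw: "path_eq (v, xs) (v', u @ [a, b] @ w)" and "fst (sigma a b) = a"
    by blast
  have "left_atoms sigma xs = left_atoms sigma (u @ [a, b] @ w)"
    using path_eq_invariants[OF uw assms] by simp
  with \<open>fst (sigma a b) = a\<close> show "\<not> distinct_mset (left_atoms sigma xs)"
    using not_distinct_left_atoms_fixed_factor by metis
qed

end

locale involutive_nondegenerate_qybm =
  fixes Lam :: "'v set" and A :: "'a set" and src tgt :: "'a \<Rightarrow> 'v"
    and sigma :: "'a \<Rightarrow> 'a \<Rightarrow> 'a \<times> 'a"
  assumes qybm: "qybm Lam A src tgt sigma"
    and involutive: "involutive A src tgt sigma"
    and nondegenerate: "nondegenerate A src tgt sigma"

sublocale involutive_nondegenerate_qybm \<subseteq> left_solution Lam A src tgt sigma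
  using qybm involutive nondegenerate by (rule qybm_left_solution)

sublocale involutive_nondegenerate_qybm \<subseteq> opp: left_solution Lam A tgt src "opp sigma"
  using qybm_opp[OF qybm] involutive_opp[OF involutive] nondegenerate_opp[OF nondegenerate]
  by (rule qybm_left_solution)

text \<open>\<open>\<Psi>\<close>: the atoms right-dividing the class of a path, with multiplicity.\<close>

definition right_atoms :: "('a \<Rightarrow> 'a \<Rightarrow> 'a \<times> 'a) \<Rightarrow> 'a list \<Rightarrow> 'a multiset" where
  "right_atoms sigma xs = left_atoms (opp sigma) (rev xs)"

context involutive_nondegenerate_qybm
begin

lemma opp_path_rev_path: "path p \<Longrightarrow> opp.path (rev_path tgt p)"
  by (rule is_path_rev_path[OF quiver])

theorem path_eq_iff_right_atoms:
  assumes "path p" "path q"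
  shows "path_eq p q \<longleftrightarrow>
    ptgt tgt p = ptgt tgt q \<and> right_atoms sigma (snd p) = right_atoms sigma (snd q)"
proof
  assume "path_eq p q"
  then have "opp.path_eq (rev_path tgt p) (rev_path tgt q)"
    by (rule peq_rev_path[OF qybm])
  then show "ptgt tgt p = ptgt tgt q \<and> right_atoms sigma (snd p) = right_atoms sigma (snd q)"
    using opp.path_eq_invariants opp_path_rev_path[OF assms(1)]
    by (fastforce simp: rev_path_def right_atoms_def)
next
  assume h: "ptgt tgt p = ptgt tgt q \<and> right_atoms sigma (snd p) = right_atoms sigma (snd q)"
  have "opp.path (ptgt tgt p, rev (snd p))" "opp.path (ptgt tgt p, rev (snd q))"
    using opp_path_rev_path[OF assms(1)] opp_path_rev_path[OF assms(2)] h
    by (simp_all add: rev_path_def)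
  then have "opp.path_eq (rev_path tgt p) (rev_path tgt q)"
    using opp.path_eq_iff_left_atoms h by (simp add: rev_path_def right_atoms_def)
  then have "path_eq (rev_path src (rev_path tgt p)) (rev_path src (rev_path tgt q))"
    using peq_rev_path[OF qybm_opp[OF qybm]] by simp
  moreover have "rev_path src (rev_path tgt p) = p" "rev_path src (rev_path tgt q) = q"
    using assms by (auto simp: is_path_def intro!: rev_path_rev_path)
  ultimately show "path_eq p q"
    by simp
qed

lemma fixed_pair_iff:
  assumes "composable A src tgt x y"
  shows "fst (sigma x y) = x \<longleftrightarrow> snd (sigma x y) = y"
  using fixed_pair_snd[OF assms] opp.fixed_pair_snd[of y x] assms
  by (auto simp: composable_def opp_def)

lemma not_distinct_right_atoms_imp_left:
  assumes "path (v, xs)" "\<not> distinct_mset (right_atoms sigma xs)"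
  shows "\<not> distinct_mset (left_atoms sigma xs)"
proof -
  obtain v' u a b w where uw: "opp.path_eq (rev_path tgt (v, xs)) (v', u @ [a, b] @ w)"
    and ab: "fst (opp sigma a b) = a"
    using opp.not_distinct_left_atoms_iff opp_path_rev_path[OF assms(1)] assms(2)
    by (fastforce simp: rev_path_def right_atoms_def)
  then have "path_eq (v, xs) (rev_path src (v', u @ [a, b] @ w))"
    using peq_rev_path[OF qybm_opp[OF qybm]] rev_path_rev_path assms(1)
    by (fastforce simp: is_path_def)
  then have ba: "path_eq (v, xs) (ptgt src (v', u @ [a, b] @ w), rev w @ [b, a] @ rev u)"
    by (simp add: rev_path_def)
  moreover have "composable A src tgt b a"
    using path_eq_invariants[OF ba assms(1)] by (auto simp: composable_def is_path_def chain_append)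
  then have "fst (sigma b a) = b"
    using fixed_pair_iff ab by (simp add: opp_def)
  ultimately show ?thesis
    using not_distinct_left_atoms_iff assms(1) by blast
qed

lemma not_distinct_left_atoms_imp_right:
  assumes "path (v, xs)" "\<not> distinct_mset (left_atoms sigma xs)"
  shows "\<not> distinct_mset (right_atoms sigma xs)"
proof -
  obtain v' u a b w where uw: "path_eq (v, xs) (v', u @ [a, b] @ w)" and ab: "fst (sigma a b) = a"
    using not_distinct_left_atoms_iff assms by blast
  then have "opp.path_eq (rev_path tgt (v, xs)) (ptgt tgt (v', u @ [a, b] @ w), rev w @ [b, a] @ rev u)"
    using peq_rev_path[OF qybm] by (fastforce simp: rev_path_def)
  moreover have "composable A src tgt a b"
    using path_eq_invariants[OF uw assms(1)] by (auto simp: composable_def is_path_def chain_append)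
  then have "fst (opp sigma b a) = b"
    using fixed_pair_snd ab by (simp add: opp_def)
  ultimately show ?thesis
    using opp.not_distinct_left_atoms_iff opp_path_rev_path[OF assms(1)]
    by (fastforce simp: rev_path_def right_atoms_def)
qed

theorem distinct_left_atoms_iff_right_atoms:
  "path (v, xs) \<Longrightarrow> distinct_mset (left_atoms sigma xs) \<longleftrightarrow> distinct_mset (right_atoms sigma xs)"
  using not_distinct_left_atoms_imp_right not_distinct_right_atoms_imp_left by blast

end

section \<open>The elements \<open>\<Delta>\<close>\<close>

lemma Omega_list_induct [case_names Nil single Cons2]:
  "P [] \<Longrightarrow> (\<And>y. P [y]) \<Longrightarrow> (\<And>y1 y2 ys. P (y1 # ys) \<Longrightarrow> P (y2 # ys) \<Longrightarrow> P (y1 # y2 # ys)) \<Longrightarrow> P xs"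
  by (rule Omega.induct[where P = "\<lambda>_ _ _ _. P"])

context involutive_nondegenerate_qybm
begin

abbreviation Om :: "'a list \<Rightarrow> 'a" where
  "Om \<equiv> Omega A src tgt sigma"

abbreviation Oms :: "'a list \<Rightarrow> 'a list" where
  "Oms \<equiv> Omegas A src tgt sigma"

lemma tstar_inverse:
  assumes "x \<in> A" "y \<in> A" "tgt x = tgt y"
  shows "tstar A src tgt sigma x y \<in> A" "tgt (tstar A src tgt sigma x y) = src y"
    and "snd (sigma (tstar A src tgt sigma x y) y) = x"
proof -
  let ?S = "{z\<in>A. tgt z = src y}" and ?f = "\<lambda>z. snd (sigma z y)"
  have "bij_betw ?f ?S {z\<in>A. tgt z = tgt y}"
    using opp.left_nondegenerate[OF assms(2)] by (simp add: opp_def)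
  then have "x \<in> ?f ` ?S"
    using assms by (auto simp: bij_betw_def)
  moreover have "tstar A src tgt sigma x y = inv_into ?S ?f x"
    by (simp add: tstar_def bullet_def)
  ultimately show "tstar A src tgt sigma x y \<in> A" "tgt (tstar A src tgt sigma x y) = src y"
    and "snd (sigma (tstar A src tgt sigma x y) y) = x"
    using inv_into_into[of x ?f ?S] f_inv_into_f[of x ?f ?S] by auto
qed

lemma Omega_arrow:
  assumes "ys \<noteq> []" "set ys \<subseteq> {y\<in>A. tgt y = mu}"
  shows "Om ys \<in> A \<and> tgt (Om ys) = (if tl ys = [] then mu else src (Om (tl ys)))"
  using assms
proof (induction ys rule: Omega_list_induct)
  case (Cons2 y1 y2 ys)
  then show ?case
    using tstar_inverse(1,2)[of "Om (y1 # ys)" "Om (y2 # ys)"] by auto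
qed auto

lemma Omega_snd:
  assumes "set (y1 # y2 # ys) \<subseteq> {y\<in>A. tgt y = mu}"
  shows "snd (sigma (Om (y1 # y2 # ys)) (Om (y2 # ys))) = Om (y1 # ys)"
  using Omega_arrow[of "y1 # ys" mu] Omega_arrow[of "y2 # ys" mu] assms tstar_inverse(3) by auto

lemma Omegas_path:
  assumes "ys \<noteq> []" "set ys \<subseteq> {y\<in>A. tgt y = mu}"
  shows "path (src (Om ys), Oms ys) \<and> ptgt tgt (src (Om ys), Oms ys) = mu"
  using assms
proof (induction ys)
  case (Cons y ys)
  have "Om (y # ys) \<in> A" "tgt (Om (y # ys)) = (if ys = [] then mu else src (Om ys))"
    using Omega_arrow[OF _ Cons.prems(2)] by auto
  with Cons show ?case
    using quiver by (cases ys) (auto simp: path_Cons is_path_def ptgt_def quiver_def)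
qed simp

lemma left_act_Omegas:
  "set (y # ys) \<subseteq> {y\<in>A. tgt y = mu} \<Longrightarrow> left_act (opp sigma) (rev (Oms ys)) (Om (y # ys)) = y"
proof (induction ys arbitrary: y)
  case (Cons y' ys)
  then show ?case
    using Omega_snd[OF Cons.prems] by (simp add: left_act_append opp_def)
qed simp

lemma right_atoms_Omegas:
  "set ys \<subseteq> {y\<in>A. tgt y = mu} \<Longrightarrow> right_atoms sigma (Oms ys) = mset ys"
proof (induction ys)
  case (Cons y ys)
  then show ?case
    using left_act_Omegas[OF Cons.prems] by (simp add: right_atoms_def left_atoms_append)
qed (simp add: right_atoms_def)

lemma Delta_right_atoms:
  assumes "ys \<noteq> []" "set ys \<subseteq> {y\<in>A. tgt y = mu}"
  obtains p where "Delta Lam A src tgt sigma ys = cl p" "path p" "ptgt tgt p = mu"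
    "right_atoms sigma (snd p) = mset ys"
  using Omegas_path[OF assms] right_atoms_Omegas[OF assms(2)] that by (simp add: Delta_def)

lemma Delta_distinct_left_atoms:
  assumes "ys \<noteq> []" "distinct ys" "set ys \<subseteq> {y\<in>A. tgt y = mu}"
  obtains p where "Delta Lam A src tgt sigma ys = cl p" "path p"
    "distinct_mset (left_atoms sigma (snd p))"
proof -
  obtain p where p: "Delta Lam A src tgt sigma ys = cl p" "path p"
    "right_atoms sigma (snd p) = mset ys"
    using Delta_right_atoms[OF assms(1,3)] by blast
  then have "distinct_mset (left_atoms sigma (snd p))"
    using distinct_left_atoms_iff_right_atoms[of "fst p" "snd p"] assms(2) by simp
  with p that show ?thesis
    by blast
qed

lemma cls_eq_Delta:
  assumes "path (v, xs)" "xs \<noteq> []" "distinct_mset (left_atoms sigma xs)"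
  obtains ys where "cl (v, xs) = Delta Lam A src tgt sigma ys" "ys \<noteq> []" "distinct ys"
    "set ys \<subseteq> {y\<in>A. tgt y = ptgt tgt (v, xs)}"
proof -
  obtain ys where ys: "mset ys = right_atoms sigma xs"
    using ex_mset by blast
  have "opp.path (ptgt tgt (v, xs), rev xs)"
    using opp_path_rev_path[OF assms(1)] by (simp add: rev_path_def)
  then have "set ys \<subseteq> {y\<in>A. tgt y = ptgt tgt (v, xs)}"
    using opp.set_left_atoms ys by (simp add: right_atoms_def flip: set_mset_mset)
  moreover have "length ys = length xs"
    using arg_cong[OF ys, of size] by (simp add: right_atoms_def)
  then have "ys \<noteq> []"
    using assms(2) by auto
  moreover obtain p where p: "Delta Lam A src tgt sigma ys = cl p" "path p"
    "ptgt tgt p = ptgt tgt (v, xs)" "right_atoms sigma (snd p) = mset ys"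
    using Delta_right_atoms calculation by blast
  have "cl (v, xs) = Delta Lam A src tgt sigma ys"
    using path_eq_iff_right_atoms[OF assms(1) p(2)] p ys by (simp add: cls_eq_iff)
  moreover have "distinct_mset (right_atoms sigma xs)"
    using assms(1,3) distinct_left_atoms_iff_right_atoms by blast
  then have "distinct ys"
    using ys distinct_mset_mset by metis
  ultimately show ?thesis
    using that by blast
qed

theorem distinct_left_atoms_classes:
  "{cl p | p. path p \<and> distinct_mset (left_atoms sigma (snd p))} =
    {Delta Lam A src tgt sigma ys | ys mu.
      mu \<in> Lam \<and> ys \<noteq> [] \<and> distinct ys \<and> set ys \<subseteq> {y\<in>A. tgt y = mu}}
    \<union> {cl (v, []) | v. v \<in> Lam}"
  (is "?C = ?D \<union> ?I")
proof (intro equalityI subsetI)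
  fix f assume "f \<in> ?C"
  then obtain v xs where f: "f = cl (v, xs)" "path (v, xs)" "distinct_mset (left_atoms sigma xs)"
    by auto
  show "f \<in> ?D \<union> ?I"
  proof (cases "xs = []")
    case False
    then obtain ys where "f = Delta Lam A src tgt sigma ys" "ys \<noteq> []" "distinct ys"
      "set ys \<subseteq> {y\<in>A. tgt y = ptgt tgt (v, xs)}"
      using cls_eq_Delta f by metis
    then show ?thesis
      using ptgt_in_vertices[OF quiver f(2)] by blast
  qed (use f in \<open>auto simp: is_path_def\<close>)
next
  fix f assume "f \<in> ?D \<union> ?I"
  then show "f \<in> ?C"
  proof
    assume "f \<in> ?D"
    then obtain ys mu where f: "f = Delta Lam A src tgt sigma ys"
      and ys: "ys \<noteq> []" "distinct ys" "set ys \<subseteq> {y\<in>A. tgt y = mu}"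
      by blast
    obtain p where "Delta Lam A src tgt sigma ys = cl p" "path p"
      "distinct_mset (left_atoms sigma (snd p))"
      by (rule Delta_distinct_left_atoms[OF ys])
    with f show "f \<in> ?C"
      by blast
  next
    assume "f \<in> ?I"
    then obtain v where "f = cl (v, [])" "v \<in> Lam"
      by blast
    then show "f \<in> ?C"
      by (intro CollectI exI[of _ "(v, [])"]) (simp add: is_path_def distinct_mset_def)
  qed
qed

end

theorem proposition5p11:
  fixes Lam :: "'v set" and A :: "'a set" and src tgt :: "'a \<Rightarrow> 'v"
    and sigma :: "'a \<Rightarrow> 'a \<Rightarrow> 'a \<times> 'a"
  assumes "qybm Lam A src tgt sigma"
    and "involutive A src tgt sigma"
    and "nondegenerate A src tgt sigma"
  shows "rlcm_closure Lam A src tgt sigma =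
           {Delta Lam A src tgt sigma ys | ys mu.
              mu \<in> Lam \<and> ys \<noteq> [] \<and> distinct ys \<and> set ys \<subseteq> {y\<in>A. tgt y = mu}}
           \<union> {cls Lam A src tgt sigma (v, []) | v. v \<in> Lam}"
proof -
  interpret involutive_nondegenerate_qybm Lam A src tgt sigma
    using assms by unfold_locales
  show ?thesis
    using rlcm_closure_eq distinct_left_atoms_classes by simp
qed

end
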